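(* Let $v>0$ and let $y^*\in\mathbb{R}^{n^+}$ be defined by $y^*_j=Y$ for $1\le j\le J$ and $y^*_j=\left(\frac{J h^+_j}{S}\right)^{\frac{\alpha}{1-\alpha}}Y$ for $J<j\le n^+$, where $J$ is the transitional index, $S=\sum_{j'=1}^{J}h^+_{j'}$ and $Y=\frac{v S^{\alpha/(1-\alpha)}}{S^{1/(1-\alpha)}+J^{\alpha/(1-\alpha)}\sum_{j'=J+1}^{n^+}(h^+_{j'})^{1/(1-\alpha)}}$. Put $\bar\alpha=1/\alpha$ and define $$\mu_j=-\frac{\bar\alpha}{v}\Big[\sum_{j'=1}^{n^+}(y^*_{j'})^{\bar\alpha}\Big]\Big(\sum_{j'=j}^{n^+}h^+_{j'}\Big)+\bar\alpha\Big[\sum_{j'=j}^{n^+}(y^*_{j'})^{\bar\alpha-1}\Big]\quad(j=1,\dots,n^+),\qquad \Lambda=-\frac{\bar\alpha\sum_{j'=1}^{n^+}(y^*_{j'})^{\bar\alpha}}{v}.$$ Then $(y,\mu,\Lambda)=(y^*,\mu,\Lambda)$ satisfies: $\bar\alpha y_j^{\bar\alpha-1}+\mu_{j+1}-\mu_j+\Lambda h^+_j=0$ for all $j\in\{1,\dots,n^+-1\}$; $\bar\alpha y_{n^+}^{\bar\alpha-1}-\mu_{n^+}+\Lambda h^+_{n^+}=0$; $\mu_{j+1}(y_j-y_{j+1})=0$ for $j\in\{1,\dots,n^+-1\}$ and $\mu_1y_1=0$; $\sum_{j=1}^{n^+}h^+_jy_j=v$; $\mu_j\ge 0$ for all $j$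 and $0\le y_1\le\cdots\le y_{n^+}$.
   Context: Fix $N\in\mathbb{N}$, $\alpha\in(0,1)$ and an integer $1\le n^+\le N$. A function $f:[0,1]\to\mathbb{R}$ is inverse S-shaped if it is strictly increasing, continuously differentiable, and there is $x_0\in[0,1]$ such that $f'$ is strictly decreasing on $[0,x_0]$ and strictly increasing on $[x_0,1]$. Let $W^+:[0,1]\to[0,1]$ be inverse S-shaped with $W^+(0)=0$, $W^+(1)=1$, and $h^+_j:=W^+\!\left(\frac{n^+-j+1}{N}\right)-W^+\!\left(\frac{n^+-j}{N}\right)$ for $j=1,\dots,n^+$. The transitional index is $J:=\min\{j\in\{1,\dots,n^+\}: j\,h^+_{j+1}\ge \sum_{j'=1}^{j}h^+_{j'}\}$ with $h^+_{n^++1}=\infty$. (These conditions are the KKT conditions of minimizing $\sum_j y_j^{1/\alpha}$ subject to $0\le y_1\le\cdots\le y_{n^+}$, $\sum_j h^+_jy_j=v$.) *)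

theory Defs
  imports "HOL-Analysis.Analysis"
begin

definition inverse_S_shaped :: "(real \<Rightarrow> real) \<Rightarrow> bool" where
  "inverse_S_shaped f \<longleftrightarrow>
     strict_mono_on {0..1} f \<and>
     (\<exists>f'. (\<forall>x\<in>{0..1}. (f has_real_derivative f' x) (at x within {0..1})) \<and>
           continuous_on {0..1} f' \<and>
           (\<exists>x0\<in>{0..1}. (\<forall>a\<in>{0..x0}. \<forall>b\<in>{0..x0}. a < b \<longrightarrow> f' b < f' a) \<and>
                         strict_mono_on {x0..1} f'))"

definition hplus :: "(real \<Rightarrow> real) \<Rightarrow> nat \<Rightarrow> nat \<Rightarrow> nat \<Rightarrow> real" where
  "hplus W N np j = W ((real np - real j + 1) / real N) - W ((real np - real j) / real N)"

text \<open>Transitional index; the convention h^+_{np+1} = \<infinity> makes the condition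
automatically true at j = np.\<close>
definition transJ :: "(real \<Rightarrow> real) \<Rightarrow> nat \<Rightarrow> nat \<Rightarrow> nat" where
  "transJ W N np = (LEAST j. 1 \<le> j \<and> j \<le> np \<and>
      (j < np \<longrightarrow> real j * hplus W N np (j+1) \<ge> (\<Sum>j'=1..j. hplus W N np j')))"

definition Ssum :: "(real \<Rightarrow> real) \<Rightarrow> nat \<Rightarrow> nat \<Rightarrow> real" where
  "Ssum W N np = (\<Sum>j'=1..transJ W N np. hplus W N np j')"

definition Yval :: "(real \<Rightarrow> real) \<Rightarrow> nat \<Rightarrow> nat \<Rightarrow> real \<Rightarrow> real \<Rightarrow> real" where
  "Yval W N np \<alpha> v =
     v * Ssum W N np powr (\<alpha> / (1 - \<alpha>)) /
     (Ssum W N np powr (1 / (1 - \<alpha>)) +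
      real (transJ W N np) powr (\<alpha> / (1 - \<alpha>)) *
        (\<Sum>j'=transJ W N np + 1..np. hplus W N np j' powr (1 / (1 - \<alpha>))))"

definition ystar :: "(real \<Rightarrow> real) \<Rightarrow> nat \<Rightarrow> nat \<Rightarrow> real \<Rightarrow> real \<Rightarrow> nat \<Rightarrow> real" where
  "ystar W N np \<alpha> v j =
     (if j \<le> transJ W N np then Yval W N np \<alpha> v
      else (real (transJ W N np) * hplus W N np j / Ssum W N np) powr (\<alpha> / (1 - \<alpha>))
           * Yval W N np \<alpha> v)"

definition mu :: "(real \<Rightarrow> real) \<Rightarrow> nat \<Rightarrow> nat \<Rightarrow> real \<Rightarrow> real \<Rightarrow> nat \<Rightarrow> real" where
  "mu W N np \<alpha> v j =
     - ((1/\<alpha>) / v) * (\<Sum>j'=1..np. ystar W N np \<alpha> v j' powr (1/\<alpha>)) * (\<Sum>j'=j..np. hplus W N np j')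
     + (1/\<alpha>) * (\<Sum>j'=j..np. ystar W N np \<alpha> v j' powr (1/\<alpha> - 1))"

definition Lam :: "(real \<Rightarrow> real) \<Rightarrow> nat \<Rightarrow> nat \<Rightarrow> real \<Rightarrow> real \<Rightarrow> real" where
  "Lam W N np \<alpha> v = - ((1/\<alpha>) * (\<Sum>j'=1..np. ystar W N np \<alpha> v j' powr (1/\<alpha>))) / v"

end

theory Submission
  imports Defs
begin

text \<open>
  Write S_k = h_1 + ... + h_k, S = S_J and \<beta> = \<alpha>/(1-\<alpha>). Then y_j = c_j^\<beta> Y, where
  c_j (scale j below) is 1 for j \<le> J and J h_j / S beyond J. Since \<beta> (1/\<alpha> - 1) = 1, the
  marginal costs are y_j^(1/\<alpha>-1) = c_j Y^(1/\<alpha>-1), and \<mu>_j becomes a positive multiple of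
  the tail sum \<Sum>_(i\<ge>j) (c_i - J h_i / S). It vanishes for j > J and equals
  (J S_(j-1) - (j-1) S) / S for j \<le> J, which is nonnegative because the minimality of J makes
  the prefix averages S_k / k nonincreasing up to J. Stationarity is a telescoping identity.

  Monotonicity of y beyond J needs h nondecreasing there. The weights h_j are the increments
  of W on a uniform grid, read from right to left. By the mean value theorem, once two
  consecutive increments of an inverse S-shaped function increase, the next one increases
  further; so a decrease h_(j+1) < h_j propagates down to index 1 and yields J h_(J+1) < S,
  contradicting the choice of J.
\<close>

section \<open>Inverse S-shaped functions\<close>

lemma mvt_within_Icc:
  fixes f :: "real \<Rightarrow> real"
  assumes deriv: "\<forall>x\<in>{lo..hi}. (f has_real_derivative f' x) (at x within {lo..hi})"
    and "lo \<le> a" "a < b" "b \<le> hi"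
  obtains z where "a < z" "z < b" "f b - f a = (b - a) * f' z"
proof -
  have "(f has_derivative (*) (f' x)) (at x within {a..b})" if "a \<le> x" "x \<le> b" for x
    using deriv that assms(2,4) DERIV_subset[of f "f' x" x "{lo..hi}" "{a..b}"]
    by (simp add: has_field_derivative_def)
  then obtain z where "z \<in> {a<..<b}" "f b - f a = f' z * (b - a)"
    using mvt_simple[OF \<open>a < b\<close>, of f "\<lambda>x. (*) (f' x)"] by blast
  then show ?thesis using that[of z] by (simp add: mult.commute)
qed

lemma valley_increase_persists:
  fixes g :: "real \<Rightarrow> real"
  assumes dec: "\<forall>a\<in>{lo..x0}. \<forall>b\<in>{lo..x0}. a < b \<longrightarrow> g b < g a"
    and inc: "strict_mono_on {x0..hi} g"
    and "lo \<le> a" "a < b" "b < c" "c \<le> hi" "g a < g b"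
  shows "g b < g c"
proof (cases "b \<le> x0")
  case True
  then have "g b < g a" using dec assms(3,4) by auto
  with \<open>g a < g b\<close> show ?thesis by simp
next
  case False
  then show ?thesis using inc assms(5,6) by (auto intro: strict_mono_onD)
qed

lemma inverse_S_shaped_increments:
  assumes "inverse_S_shaped W" "0 \<le> a" "0 < d" "a + 3 * d \<le> 1"
    and "W (a + d) - W a < W (a + 2 * d) - W (a + d)"
  shows "W (a + 2 * d) - W (a + d) < W (a + 3 * d) - W (a + 2 * d)"
proof -
  obtain W' x0 where deriv: "\<forall>x\<in>{0..1}. (W has_real_derivative W' x) (at x within {0..1})"
    and dec: "\<forall>a\<in>{0..x0}. \<forall>b\<in>{0..x0}. a < b \<longrightarrow> W' b < W' a"
    and inc: "strict_mono_on {x0..1} W'"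
    using assms(1) unfolding inverse_S_shaped_def by blast
  obtain z1 where z1: "a < z1" "z1 < a + d" "W (a + d) - W a = d * W' z1"
    using mvt_within_Icc[OF deriv, of a "a + d"] assms(2-4) by auto
  obtain z2 where z2: "a + d < z2" "z2 < a + 2 * d" "W (a + 2 * d) - W (a + d) = d * W' z2"
    using mvt_within_Icc[OF deriv, of "a + d" "a + 2 * d"] assms(2-4) by auto
  obtain z3 where z3: "a + 2 * d < z3" "z3 < a + 3 * d" "W (a + 3 * d) - W (a + 2 * d) = d * W' z3"
    using mvt_within_Icc[OF deriv, of "a + 2 * d" "a + 3 * d"] assms(2-4) by auto
  have "W' z1 < W' z2" using assms(3,5) z1(3) z2(3) by simp
  then have "W' z2 < W' z3"
    using valley_increase_persists[OF dec inc, of z1 z2 z3] z1 z2 z3 assms(2,4) by linarith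
  then show ?thesis using assms(3) z2(3) z3(3) by simp
qed

lemma sum_atLeastAtMost_split:
  fixes f :: "nat \<Rightarrow> 'a::comm_monoid_add"
  assumes "m \<le> k + 1" "k \<le> n"
  shows "sum f {m..n} = sum f {m..k} + sum f {k+1..n}"
  using sum.ub_add_nat[of m k f "n - k"] assms by simp

lemma strict_decrease_propagates_down:
  fixes h :: "nat \<Rightarrow> 'a::order"
  assumes step: "\<And>k. 1 \<le> k \<Longrightarrow> k + 2 \<le> n \<Longrightarrow> h (k + 2) < h (k + 1) \<Longrightarrow> h (k + 1) < h k"
    and "h (j + 1) < h j" "j + 1 \<le> n" "1 \<le> i" "i \<le> j"
  shows "h (i + 1) < h i"
  using \<open>i \<le> j\<close>
proof (induction i rule: inc_induct)
  case base
  show ?case by (rule assms(2))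
next
  case (step k)
  then show ?case using assms(3,4) step(1) by (intro assms(1)) (auto simp: numeral_2_eq_2)
qed

lemma prefix_average_antimono:
  fixes h :: "nat \<Rightarrow> real"
  assumes below: "\<And>k. 1 \<le> k \<Longrightarrow> k < J \<Longrightarrow> real k * h (k + 1) \<le> (\<Sum>j=1..k. h j)"
    and "i \<le> i'" "i' \<le> J"
  shows "real i * (\<Sum>j=1..i'. h j) \<le> real i' * (\<Sum>j=1..i. h j)"
  using assms(2,3)
proof (induction i' rule: dec_induct)
  case base
  show ?case by simp
next
  case (step k)
  let ?S = "\<lambda>k. \<Sum>j=1..k. h j"
  show ?case
  proof (cases "k = 0")
    case True
    with step show ?thesis by simp
  next
    case False
    have IH: "real i * ?S k \<le> real k * ?S i" using step by simp
    have "real k * ?S (Suc k) = real k * ?S k + real k * h (k + 1)" by (simp add: algebra_simps)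
    also have "\<dots> \<le> (real k + 1) * ?S k" using below[of k] False step by (simp add: algebra_simps)
    finally have "real k * ?S (Suc k) \<le> (real k + 1) * ?S k" .
    then have "real i * (real k * ?S (Suc k)) \<le> real i * ((real k + 1) * ?S k)"
      by (intro mult_left_mono) auto
    then have "real k * (real i * ?S (Suc k)) \<le> (real k + 1) * (real i * ?S k)"
      by (simp add: algebra_simps)
    also have "\<dots> \<le> (real k + 1) * (real k * ?S i)" using IH by (intro mult_left_mono) auto
    finally have "real k * (real i * ?S (Suc k)) \<le> real k * ((real k + 1) * ?S i)"
      by (simp add: algebra_simps)
    then show ?thesis using False by (simp add: add.commute)
  qed
qed

section \<open>The weights and the transitional index\<close>

lemma hplus_pos:
  assumes "strict_mono_on {0..1} W" "np \<le> N" "1 \<le> j" "j \<le> np"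
  shows "0 < hplus W N np j"
proof -
  have "real N > 0" using assms(2-4) by simp
  then have "(real np - real j) / real N < (real np - real j + 1) / real N"
    and "(real np - real j) / real N \<in> {0..1}" "(real np - real j + 1) / real N \<in> {0..1}"
    using assms(2-4) by (auto simp: divide_strict_right_mono field_simps)
  then show ?thesis unfolding hplus_def using strict_mono_onD[OF assms(1)] by simp
qed

lemma hplus_decrease_propagates:
  assumes "inverse_S_shaped W" "np \<le> N" "1 \<le> k" "k + 2 \<le> np"
    and "hplus W N np (k + 2) < hplus W N np (k + 1)"
  shows "hplus W N np (k + 1) < hplus W N np k"
proof -
  define a where "a = (real np - real k - 2) / real N"
  define d where "d = 1 / real N"
  have N: "real N > 0" using assms(2,4) by simp
  have "hplus W N np (k + 2) = W (a + d) - W a"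
    "hplus W N np (k + 1) = W (a + 2 * d) - W (a + d)"
    "hplus W N np k = W (a + 3 * d) - W (a + 2 * d)"
    unfolding hplus_def a_def d_def using N by (simp_all add: field_simps)
  moreover have "0 \<le> a" "0 < d" "a + 3 * d \<le> 1"
    unfolding a_def d_def using N assms(2-4) by (simp_all add: field_simps)
  ultimately show ?thesis using inverse_S_shaped_increments[OF assms(1)] assms(5) by simp
qed

lemma transJ_LeastI:
  assumes "1 \<le> np"
  shows "1 \<le> transJ W N np" "transJ W N np \<le> np"
    and "transJ W N np < np \<Longrightarrow>
           Ssum W N np \<le> real (transJ W N np) * hplus W N np (transJ W N np + 1)"
proof -
  let ?P = "\<lambda>j. 1 \<le> j \<and> j \<le> np \<and>
    (j < np \<longrightarrow> real j * hplus W N np (j+1) \<ge> (\<Sum>j'=1..j. hplus W N np j'))"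
  have "?P np" using assms by simp
  then have "?P (transJ W N np)" unfolding transJ_def by (rule LeastI)
  then show "1 \<le> transJ W N np" "transJ W N np \<le> np"
    and "transJ W N np < np \<Longrightarrow>
           Ssum W N np \<le> real (transJ W N np) * hplus W N np (transJ W N np + 1)"
    unfolding Ssum_def by auto
qed

lemma less_transJ:
  assumes "1 \<le> np" "1 \<le> k" "k < transJ W N np"
  shows "real k * hplus W N np (k + 1) < (\<Sum>j=1..k. hplus W N np j)"
proof -
  have "k < np" using transJ_LeastI(2)[OF assms(1), of W N] assms(3) by simp
  then show ?thesis using not_less_Least[of k] assms(2,3) unfolding transJ_def by fastforce
qed

lemma hplus_mono_after_transJ:
  assumes "inverse_S_shaped W" "np \<le> N" "transJ W N np < j" "j + 1 \<le> np"
  shows "hplus W N np j \<le> hplus W N np (j + 1)"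
proof (rule ccontr)
  let ?h = "hplus W N np" and ?J = "transJ W N np"
  assume "\<not> ?h j \<le> ?h (j + 1)"
  then have decreasing: "?h (i + 1) < ?h i" if "1 \<le> i" "i \<le> j" for i
    using strict_decrease_propagates_down[of np ?h j i] hplus_decrease_propagates[OF assms(1,2)]
      that assms(4) by simp
  have "1 \<le> np" using assms(3,4) by simp
  then have J: "1 \<le> ?J" "?J < np" using transJ_LeastI[of np W N] assms(3,4) by auto
  have "?h (?J + 1) < ?h i" if "i \<in> {1..?J}" for i
  proof -
    have "{i..<?J + 1} \<subseteq> {1..j}" using that assms(3) by auto
    then show ?thesis
      using lift_Suc_mono_less_ivl[of "{1..j}" "\<lambda>i. - ?h i" i "?J + 1"] decreasing that by auto
  qed
  then have "(\<Sum>i=1..?J. ?h (?J + 1)) < (\<Sum>i=1..?J. ?h i)"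
    using J by (intro sum_strict_mono) auto
  then show False using transJ_LeastI(3)[of np W N] J unfolding Ssum_def by simp
qed

section \<open>The candidate KKT point\<close>

lemma mu_diff:
  assumes "j \<le> np"
  shows "mu W N np \<alpha> v j - mu W N np \<alpha> v (j + 1)
         = (1/\<alpha>) * ystar W N np \<alpha> v j powr (1/\<alpha> - 1) + Lam W N np \<alpha> v * hplus W N np j"
  using assms by (simp add: mu_def Lam_def sum.atLeast_Suc_atMost algebra_simps add_divide_distrib)

lemma mu_beyond_last: "mu W N np \<alpha> v (np + 1) = 0"
  by (simp add: mu_def)

locale transitional_solution =
  fixes W :: "real \<Rightarrow> real" and N np :: nat and \<alpha> v :: real
  assumes alpha_pos: "0 < \<alpha>" and alpha_less_1: "\<alpha> < 1"
    and np_pos: "1 \<le> np" and np_le_N: "np \<le> N"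
    and S_shaped: "inverse_S_shaped W" and v_pos: "0 < v"
begin

abbreviation "h \<equiv> hplus W N np"
abbreviation "J \<equiv> transJ W N np"
abbreviation "S \<equiv> Ssum W N np"
abbreviation "Y \<equiv> Yval W N np \<alpha> v"
abbreviation "y \<equiv> ystar W N np \<alpha> v"
abbreviation "\<beta> \<equiv> \<alpha> / (1 - \<alpha>)"

definition scale :: "nat \<Rightarrow> real" where
  "scale j = (if j \<le> J then 1 else real J * h j / S)"

definition excess :: "nat \<Rightarrow> real" where
  "excess j = scale j - real J / S * h j"

lemma h_pos: "1 \<le> j \<Longrightarrow> j \<le> np \<Longrightarrow> 0 < h j"
  using S_shaped np_le_N by (intro hplus_pos) (auto simp: inverse_S_shaped_def)

lemma J_pos: "1 \<le> J" and J_le_np: "J \<le> np"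
  using transJ_LeastI[OF np_pos] by auto

lemma S_eq: "S = (\<Sum>j=1..J. h j)"
  by (simp add: Ssum_def)

lemma S_pos: "0 < S"
  unfolding S_eq using J_pos J_le_np h_pos by (intro sum_pos) auto

lemma one_plus_beta: "1 + \<beta> = 1 / (1 - \<alpha>)"
  using alpha_less_1 by (simp add: field_simps)

lemma Y_equation:
  "Y * (S powr (1 + \<beta>) + real J powr \<beta> * (\<Sum>j=J+1..np. h j powr (1 + \<beta>))) = v * S powr \<beta>"
  and Y_pos: "0 < Y"
proof -
  let ?D = "S powr (1 + \<beta>) + real J powr \<beta> * (\<Sum>j=J+1..np. h j powr (1 + \<beta>))"
  have "0 < ?D" using S_pos by (intro add_pos_nonneg mult_nonneg_nonneg sum_nonneg) auto
  moreover have "Y = v * S powr \<beta> / ?D" unfolding Yval_def one_plus_beta ..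
  ultimately show "Y * ?D = v * S powr \<beta>" "0 < Y" using v_pos S_pos by simp_all
qed

lemma ystar_eq: "y j = scale j powr \<beta> * Y"
  by (simp add: ystar_def scale_def)

lemma ystar_head: "j \<le> J \<Longrightarrow> y j = Y"
  by (simp add: ystar_eq scale_def)

lemma scale_pos: "1 \<le> j \<Longrightarrow> j \<le> np \<Longrightarrow> 0 < scale j"
  using h_pos S_pos J_pos by (simp add: scale_def)

lemma ystar_pos: "1 \<le> j \<Longrightarrow> j \<le> np \<Longrightarrow> 0 < y j"
  using scale_pos[of j] Y_pos by (simp add: ystar_eq)

lemma ystar_powr_marginal:
  assumes "1 \<le> j" "j \<le> np"
  shows "y j powr (1/\<alpha> - 1) = scale j * Y powr (1/\<alpha> - 1)"
proof -
  have exponent: "\<beta> * (1/\<alpha> - 1) = 1" using alpha_pos alpha_less_1 by (simp add: field_simps)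
  have "(scale j powr \<beta>) powr (1/\<alpha> - 1) = scale j"
    unfolding powr_powr exponent using scale_pos[OF assms] by simp
  then show ?thesis using scale_pos[OF assms] Y_pos by (simp add: ystar_eq powr_mult)
qed

lemma weighted_sum_ystar: "(\<Sum>j=1..np. h j * y j) = v"
proof -
  have tail: "h j * y j = (real J / S) powr \<beta> * Y * h j powr (1 + \<beta>)" if "j \<in> {J+1..np}" for j
  proof -
    have "0 < h j" using h_pos J_pos that by auto
    then show ?thesis using that S_pos
      by (simp add: ystar_eq scale_def powr_add powr_mult powr_divide)
  qed
  have head: "(\<Sum>j=1..J. h j * y j) = S * Y"
    by (simp add: ystar_head S_eq sum_distrib_right)
  have "(\<Sum>j=J+1..np. h j * y j) = (real J / S) powr \<beta> * Y * (\<Sum>j=J+1..np. h j powr (1 + \<beta>))"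
    unfolding sum_distrib_left by (rule sum.cong) (simp_all add: tail)
  then have "S powr \<beta> * (\<Sum>j=1..np. h j * y j)
        = S powr \<beta> * (S * Y + (real J / S) powr \<beta> * Y * (\<Sum>j=J+1..np. h j powr (1 + \<beta>)))"
    using J_pos J_le_np head sum_atLeastAtMost_split[of 1 J np "\<lambda>j. h j * y j"] by simp
  also have "\<dots> = Y * (S powr (1 + \<beta>) + real J powr \<beta> * (\<Sum>j=J+1..np. h j powr (1 + \<beta>)))"
    using S_pos by (simp add: powr_add powr_divide algebra_simps)
  also have "\<dots> = S powr \<beta> * v" using Y_equation by (simp add: mult.commute)
  finally show ?thesis using S_pos by simp
qed

lemma excess_tail: "J < j \<Longrightarrow> excess j = 0"
  by (simp add: excess_def scale_def)

lemma sum_excess: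
  assumes "1 \<le> j" "j \<le> J"
  shows "(\<Sum>i=j..np. excess i) = (real J * (\<Sum>i=1..j-1. h i) - real (j - 1) * S) / S"
proof -
  have "(\<Sum>i=J+1..np. excess i) = 0" by (intro sum.neutral) (auto simp: excess_tail)
  then have "(\<Sum>i=j..np. excess i) = (\<Sum>i=j..J. excess i)"
    using sum_atLeastAtMost_split[of j J np excess] assms J_le_np by simp
  also have "\<dots> = (\<Sum>i=j..J. 1 - real J / S * h i)"
    by (rule sum.cong) (auto simp: excess_def scale_def)
  also have "\<dots> = real (J + 1 - j) - real J / S * (\<Sum>i=j..J. h i)"
    by (simp add: sum_subtractf sum_distrib_left)
  also have "(\<Sum>i=j..J. h i) = S - (\<Sum>i=1..j-1. h i)"
    using S_eq sum_atLeastAtMost_split[of 1 "j - 1" J h] assms by simp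
  finally show ?thesis using S_pos assms by (simp add: field_simps of_nat_diff)
qed

lemma sum_ystar_powr: "(\<Sum>j=1..np. y j powr (1/\<alpha>)) = Y powr (1/\<alpha> - 1) * (real J / S * v)"
proof -
  have "y j powr (1/\<alpha>) = Y powr (1/\<alpha> - 1) * (real J / S * (h j * y j) + excess j * Y)"
    if "j \<in> {1..np}" for j
  proof -
    have "y j powr (1/\<alpha>) = y j * y j powr (1/\<alpha> - 1)"
      using ystar_pos[of j] that powr_add[of "y j" 1 "1/\<alpha> - 1"] by simp
    also have "\<dots> = Y powr (1/\<alpha> - 1) * (scale j * y j)"
      using ystar_powr_marginal[of j] that by simp
    also have "scale j * y j = real J / S * (h j * y j) + excess j * Y"
      by (cases "j \<le> J") (auto simp: excess_def scale_def ystar_head algebra_simps)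
    finally show ?thesis .
  qed
  then have "(\<Sum>j=1..np. y j powr (1/\<alpha>))
             = Y powr (1/\<alpha> - 1) * (real J / S * (\<Sum>j=1..np. h j * y j) + Y * (\<Sum>j=1..np. excess j))"
    by (simp add: sum.distrib sum_distrib_left algebra_simps)
  also have "(\<Sum>j=1..np. excess j) = 0" using sum_excess[of 1] J_pos by simp
  finally show ?thesis using weighted_sum_ystar by simp
qed

lemma mu_eq:
  assumes "1 \<le> j"
  shows "mu W N np \<alpha> v j = (1/\<alpha>) * Y powr (1/\<alpha> - 1) * (\<Sum>i=j..np. excess i)"
proof -
  have marginal: "(\<Sum>i=j..np. y i powr (1/\<alpha> - 1)) = Y powr (1/\<alpha> - 1) * (\<Sum>i=j..np. scale i)"
    unfolding sum_distrib_left
    by (rule sum.cong) (use assms in \<open>auto simp: ystar_powr_marginal mult.commute\<close>)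
  have "(\<Sum>i=j..np. scale i) = (\<Sum>i=j..np. excess i) + real J / S * (\<Sum>i=j..np. h i)"
    by (simp add: excess_def sum_subtractf sum_distrib_left)
  then show ?thesis
    unfolding mu_def sum_ystar_powr marginal using v_pos by (simp add: algebra_simps)
qed

lemma mu_tail: "J < j \<Longrightarrow> mu W N np \<alpha> v j = 0"
  using J_pos by (simp add: mu_eq excess_tail)

lemma mu_first: "mu W N np \<alpha> v 1 = 0"
  using J_pos by (simp add: mu_eq sum_excess)

lemma mu_nonneg:
  assumes "1 \<le> j"
  shows "0 \<le> mu W N np \<alpha> v j"
proof (cases "j \<le> J")
  case True
  have "real (j - 1) * S \<le> real J * (\<Sum>i=1..j-1. h i)"
    unfolding S_eq
  proof (rule prefix_average_antimono)
    show "real k * h (k + 1) \<le> (\<Sum>i=1..k. h i)" if "1 \<le> k" "k < J" for k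
      using less_transJ[OF np_pos that] by simp
  qed (use True in simp_all)
  then show ?thesis using assms True S_pos Y_pos alpha_pos by (simp add: mu_eq sum_excess)
next
  case False
  then show ?thesis by (simp add: mu_tail)
qed

lemma scale_mono:
  assumes "1 \<le> j" "j + 1 \<le> np"
  shows "scale j \<le> scale (j + 1)"
proof -
  consider "j < J" | "j = J" | "J < j" by linarith
  then show ?thesis
  proof cases
    case 2
    then have "S \<le> real J * h (J + 1)" using transJ_LeastI(3)[OF np_pos] assms by simp
    then show ?thesis using 2 S_pos by (simp add: scale_def)
  next
    case 3
    then have "h j \<le> h (j + 1)" using hplus_mono_after_transJ[OF S_shaped np_le_N] assms by simp
    then have "real J * h j / S \<le> real J * h (j + 1) / S"
      using S_pos by (intro divide_right_mono mult_left_mono) auto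
    then show ?thesis using 3 by (simp add: scale_def)
  qed (simp add: scale_def)
qed

lemma ystar_mono:
  assumes "1 \<le> j" "j + 1 \<le> np"
  shows "y j \<le> y (j + 1)"
proof -
  have "scale j powr \<beta> \<le> scale (j + 1) powr \<beta>"
    using scale_mono[OF assms] scale_pos[of j] assms alpha_pos alpha_less_1 by (intro powr_mono2) auto
  then show ?thesis using Y_pos by (simp add: ystar_eq)
qed

lemma complementary_slackness:
  "mu W N np \<alpha> v (j + 1) * (y j - y (j + 1)) = 0"
  by (cases "j + 1 \<le> J") (simp_all add: ystar_head mu_tail)

end

theorem lemma2:
  fixes N np :: nat and \<alpha> v :: real and W :: "real \<Rightarrow> real"
  assumes "0 < \<alpha>" "\<alpha> < 1" "1 \<le> np" "np \<le> N"
    and "inverse_S_shaped W" "W 0 = 0" "W 1 = 1"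
    and "v > 0"
  defines "y \<equiv> ystar W N np \<alpha> v" and "m \<equiv> mu W N np \<alpha> v" and "\<Lambda> \<equiv> Lam W N np \<alpha> v"
      and "h \<equiv> hplus W N np"
  shows "(\<forall>j\<in>{1..np-1}. (1/\<alpha>) * y j powr (1/\<alpha> - 1) + m (j+1) - m j + \<Lambda> * h j = 0)
       \<and> (1/\<alpha>) * y np powr (1/\<alpha> - 1) - m np + \<Lambda> * h np = 0
       \<and> (\<forall>j\<in>{1..np-1}. m (j+1) * (y j - y (j+1)) = 0)
       \<and> m 1 * y 1 = 0
       \<and> (\<Sum>j=1..np. h j * y j) = v
       \<and> (\<forall>j\<in>{1..np}. m j \<ge> 0)
       \<and> 0 \<le> y 1 \<and> (\<forall>j\<in>{1..np-1}. y j \<le> y (j+1))"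
proof -
  interpret sol: transitional_solution W N np \<alpha> v
    using assms(1-5,8) by unfold_locales
  have stationary: "(1/\<alpha>) * y j powr (1/\<alpha> - 1) + m (j+1) - m j + \<Lambda> * h j = 0" if "j \<le> np" for j
    using mu_diff[OF that, of W N \<alpha> v] unfolding y_def m_def \<Lambda>_def h_def by linarith
  have "m (np + 1) = 0" unfolding m_def by (rule mu_beyond_last)
  then have "(1/\<alpha>) * y np powr (1/\<alpha> - 1) - m np + \<Lambda> * h np = 0"
    using stationary[of np] by simp
  moreover have "\<forall>j\<in>{1..np-1}. (1/\<alpha>) * y j powr (1/\<alpha> - 1) + m (j+1) - m j + \<Lambda> * h j = 0"
    using stationary by auto
  moreover have "y j \<le> y (j+1)" if "j \<in> {1..np-1}" for j
    using sol.ystar_mono[of j] that unfolding y_def by auto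
  moreover have "0 \<le> y 1" using sol.ystar_pos[of 1] assms(3) unfolding y_def by simp
  ultimately show ?thesis
    using sol.complementary_slackness sol.mu_first sol.weighted_sum_ystar sol.mu_nonneg
    unfolding y_def m_def h_def by simp
qed

end
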